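(* For a Galton--Watson fractal model with contraction ratio $\rho$, there is a constant $c>0$ depending only on the model such that for all $s>0$ and all integers $0\le m<n$, \[ \mathbb{P}\bigl[\operatorname{Fav}(S_n)>Z_m\mu_{n-m}+s\bigm| S_m\bigr]\le\exp\Bigl(-\frac{c\,s^2}{Z_m\rho^m}\Bigr). \]
   Context: Galton--Watson (GW) fractal model: let $J_0\subset\mathbb{R}^2$ be a compact set equal to the closure of its interior, with finitely many connected components. Let $\mathfrak X=(\mathbf L;h_1(J_0),\dots,h_{\mathbf L}(J_0))$ be a random variable where $\mathbf L\in\{0,1,2,\dots\}$ is bounded, each $h_i$ is a homothety with contraction ratio $\rho\in(0,1)$ and $h_i(J_0)\subset J_0$, and $\mathbb{E}[\mathbf L]=\rho^{-1}$. Set $\mathcal{S}_0=\{J_0\}$, $S_0=J_0$; given $\mathcal{S}_n$, for each $R\in\mathcal{S}_n$ take an independent realization of $\mathfrak X$ (independent of $\mathcal{S}_n$) and let $\mathcal{S}_{n+1}$ consist of the images $g_R(h^R_i(J_0))$ where $g_R$ is the homothety with $g_R(J_0)=R$; $S_{n+1}=\bigcup\mathcal{S}_{n+1}$. $Z_m=\rho^m\#\mathcal{S}_m$, $\mu_k=\mathbb{E}[\operatorname{Fav}(S_k)]$, and conditioning on $S_m$ means conditioning on the realization of $\mathcal{S}_m$. $\operatorname{Fav}(A)=\int_0^\pi|\operatorname{proj}_\theta A|\,d\theta$ with $\operatorname{proj}_\theta(x)=\langle x,(-\sin\theta,\cos\theta)\rangle$. *)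

theory Defs
  imports "HOL-Analysis.Analysis" "HOL-Probability.Probability"
begin

definition proj :: "real \<Rightarrow> real^2 \<Rightarrow> real" where
  "proj \<theta> x = - sin \<theta> * (x $ 1) + cos \<theta> * (x $ 2)"

definition Fav :: "(real^2) set \<Rightarrow> real" where
  "Fav A = (LINT \<theta>:{0..pi}|lborel. measure lborel (proj \<theta> ` A))"

text \<open>One realization of the offspring variable X is a pair (L, a): the number L of children
  and translation vectors a i, the i-th child map being h_i x = rho x + a i (i < L).
  A realization of the whole GW process is an assignment of such a pair to every node of the
  (Ulam-Harris) tree; nodes are lists, the head being the last step.
  gw_pos rho w v = Some b iff the node v is alive, and then the piece attached to v is
  g_v(J0) with g_v x = rho^(length v) x + b.\<close>
fun gw_pos :: "real \<Rightarrow> (nat list \<Rightarrow> nat \<times> (nat \<Rightarrow> real^2)) \<Rightarrow> nat list \<Rightarrow> (real^2) option" where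
  "gw_pos \<rho> \<omega> [] = Some 0"
| "gw_pos \<rho> \<omega> (i # v) =
     (case gw_pos \<rho> \<omega> v of
        None \<Rightarrow> None
      | Some b \<Rightarrow> if i < fst (\<omega> v) then Some (b + (\<rho> ^ length v) *\<^sub>R snd (\<omega> v) i) else None)"

text \<open>Alive nodes of generation n (indexing the collection \<S>_n, with multiplicity).\<close>
definition gw_nodes :: "real \<Rightarrow> (nat list \<Rightarrow> nat \<times> (nat \<Rightarrow> real^2)) \<Rightarrow> nat \<Rightarrow> nat list set" where
  "gw_nodes \<rho> \<omega> n = {v. length v = n \<and> gw_pos \<rho> \<omega> v \<noteq> None}"

definition gw_S :: "(real^2) set \<Rightarrow> real \<Rightarrow> (nat list \<Rightarrow> nat \<times> (nat \<Rightarrow> real^2)) \<Rightarrow> nat \<Rightarrow> (real^2) set" where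
  "gw_S J0 \<rho> \<omega> n = (\<Union>v\<in>gw_nodes \<rho> \<omega> n. (\<lambda>x. (\<rho> ^ n) *\<^sub>R x + the (gw_pos \<rho> \<omega> v)) ` J0)"

definition gw_Z :: "real \<Rightarrow> (nat list \<Rightarrow> nat \<times> (nat \<Rightarrow> real^2)) \<Rightarrow> nat \<Rightarrow> real" where
  "gw_Z \<rho> \<omega> n = \<rho> ^ n * real (card (gw_nodes \<rho> \<omega> n))"

definition gw_space :: "(nat \<times> (nat \<Rightarrow> real^2)) measure \<Rightarrow> (nat list \<Rightarrow> nat \<times> (nat \<Rightarrow> real^2)) measure" where
  "gw_space D = (\<Pi>\<^sub>M v\<in>UNIV. D)"

text \<open>The information up to generation m: the sigma-algebra generated by the offspring
  variables of all nodes of depth < m (these determine \<S>_m).\<close>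
definition gw_filt :: "(nat \<times> (nat \<Rightarrow> real^2)) measure \<Rightarrow> nat \<Rightarrow> (nat list \<Rightarrow> nat \<times> (nat \<Rightarrow> real^2)) measure" where
  "gw_filt D m = vimage_algebra (space (gw_space D)) (\<lambda>\<omega>. restrict \<omega> {v. length v < m})
                   (\<Pi>\<^sub>M v\<in>{v. length v < m}. D)"

end

(*
  Conditionally on the first m generations, S_n is the union, over the #S_m = Z_m rho^-m nodes v
  of generation m, of the rescaled and translated copies rho^m S'_v + b_v of independent copies
  S'_v of S_(n-m). Favard length is subadditive and scales linearly, so Fav(S_n) is at most the
  sum of the independent variables rho^m Fav(S'_v), each of mean rho^m mu_(n-m) and with values
  in [0, rho^m Fav J0]. Hoeffding's inequality for these summands gives the bound with
  c = 2 / (Fav J0 + 1)^2. The conditioning is made explicit by splitting the product space of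
  offspring variables into the coordinates of depth < m and the remaining ones and using Fubini.
*)

theory Submission
  imports Defs
begin

section \<open>Galton-Watson trees\<close>

type_synonym gw_realization = "nat list \<Rightarrow> nat \<times> (nat \<Rightarrow> real^2)"

fun gw_alive :: "gw_realization \<Rightarrow> nat list \<Rightarrow> bool" where
  "gw_alive \<omega> [] = True"
| "gw_alive \<omega> (i # v) = (gw_alive \<omega> v \<and> i < fst (\<omega> v))"

fun gw_offset :: "real \<Rightarrow> gw_realization \<Rightarrow> nat list \<Rightarrow> real^2" where
  "gw_offset \<rho> \<omega> [] = 0"
| "gw_offset \<rho> \<omega> (i # v) = gw_offset \<rho> \<omega> v + (\<rho> ^ length v) *\<^sub>R snd (\<omega> v) i"

definition gw_subtree :: "nat list \<Rightarrow> gw_realization \<Rightarrow> gw_realization" where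
  "gw_subtree v \<omega> = (\<lambda>u. \<omega> (u @ v))"

lemma gw_pos_eq: "gw_pos \<rho> \<omega> v = (if gw_alive \<omega> v then Some (gw_offset \<rho> \<omega> v) else None)"
  by (induction v) auto

lemma gw_nodes_eq: "gw_nodes \<rho> \<omega> n = {v. length v = n \<and> gw_alive \<omega> v}"
  unfolding gw_nodes_def gw_pos_eq by auto

lemma gw_S_eq: "gw_S J0 \<rho> \<omega> n = (\<Union>v\<in>gw_nodes \<rho> \<omega> n. (\<lambda>x. (\<rho> ^ n) *\<^sub>R x + gw_offset \<rho> \<omega> v) ` J0)"
  unfolding gw_S_def by (intro SUP_cong refl) (simp add: gw_nodes_eq gw_pos_eq)

lemma gw_nodes_0: "gw_nodes \<rho> \<omega> 0 = {[]}"
  by (auto simp: gw_nodes_eq)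

lemma gw_nodes_Suc:
  "gw_nodes \<rho> \<omega> (Suc n) = (\<Union>v\<in>gw_nodes \<rho> \<omega> n. (\<lambda>i. i # v) ` {..<fst (\<omega> v)})"
  by (auto simp: gw_nodes_eq length_Suc_conv)

lemma finite_gw_nodes: "finite (gw_nodes \<rho> \<omega> n)"
  by (induction n) (auto simp: gw_nodes_0 gw_nodes_Suc)

lemma gw_alive_append: "gw_alive \<omega> (u @ v) \<longleftrightarrow> gw_alive \<omega> v \<and> gw_alive (gw_subtree v \<omega>) u"
  by (induction u) (auto simp: gw_subtree_def)

lemma gw_offset_append:
  "gw_offset \<rho> \<omega> (u @ v) = gw_offset \<rho> \<omega> v + (\<rho> ^ length v) *\<^sub>R gw_offset \<rho> (gw_subtree v \<omega>) u"
  by (induction u) (auto simp: gw_subtree_def power_add algebra_simps)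

lemma gw_alive_cong: "(\<And>w. length w < length v \<Longrightarrow> \<omega> w = \<omega>' w) \<Longrightarrow> gw_alive \<omega> v = gw_alive \<omega>' v"
  by (induction v) auto

lemma gw_nodes_cong: "(\<And>w. length w < n \<Longrightarrow> \<omega> w = \<omega>' w) \<Longrightarrow> gw_nodes \<rho> \<omega> n = gw_nodes \<rho> \<omega>' n"
  unfolding gw_nodes_eq using gw_alive_cong by blast

lemma gw_nodes_add:
  "gw_nodes \<rho> \<omega> (k + m) = (\<Union>v\<in>gw_nodes \<rho> \<omega> m. (\<lambda>u. u @ v) ` gw_nodes \<rho> (gw_subtree v \<omega>) k)"
proof safe
  fix w assume "w \<in> gw_nodes \<rho> \<omega> (k + m)"
  then have w: "length w = k + m" "gw_alive \<omega> (take k w @ drop k w)"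
    by (simp_all add: gw_nodes_eq)
  then show "w \<in> (\<Union>v\<in>gw_nodes \<rho> \<omega> m. (\<lambda>u. u @ v) ` gw_nodes \<rho> (gw_subtree v \<omega>) k)"
    unfolding gw_alive_append
    by (intro UN_I[of "drop k w"] image_eqI[of _ _ "take k w"]) (auto simp: gw_nodes_eq)
qed (auto simp: gw_nodes_eq gw_alive_append)

lemma gw_S_add:
  "gw_S J0 \<rho> \<omega> (k + m) =
     (\<Union>v\<in>gw_nodes \<rho> \<omega> m. (\<lambda>y. (\<rho> ^ m) *\<^sub>R y + gw_offset \<rho> \<omega> v) ` gw_S J0 \<rho> (gw_subtree v \<omega>) k)"
proof -
  have "gw_S J0 \<rho> \<omega> (k + m) = (\<Union>v\<in>gw_nodes \<rho> \<omega> m. \<Union>u\<in>gw_nodes \<rho> (gw_subtree v \<omega>) k.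
      (\<lambda>x. (\<rho> ^ (k + m)) *\<^sub>R x + gw_offset \<rho> \<omega> (u @ v)) ` J0)"
    unfolding gw_S_eq gw_nodes_add by auto
  also have "\<dots> = (\<Union>v\<in>gw_nodes \<rho> \<omega> m. \<Union>u\<in>gw_nodes \<rho> (gw_subtree v \<omega>) k.
      (\<lambda>y. (\<rho> ^ m) *\<^sub>R y + gw_offset \<rho> \<omega> v) ` (\<lambda>x. (\<rho> ^ k) *\<^sub>R x + gw_offset \<rho> (gw_subtree v \<omega>) u) ` J0)"
    by (auto simp: gw_nodes_eq gw_offset_append image_image power_add algebra_simps intro!: SUP_cong image_cong)
  also have "\<dots> = (\<Union>v\<in>gw_nodes \<rho> \<omega> m. (\<lambda>y. (\<rho> ^ m) *\<^sub>R y + gw_offset \<rho> \<omega> v) ` gw_S J0 \<rho> (gw_subtree v \<omega>) k)"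
    unfolding gw_S_eq by (simp add: image_UN)
  finally show ?thesis .
qed

definition offspring_inside :: "(real^2) set \<Rightarrow> real \<Rightarrow> nat \<times> (nat \<Rightarrow> real^2) \<Rightarrow> bool" where
  "offspring_inside J0 \<rho> d \<longleftrightarrow> (\<forall>i < fst d. (\<lambda>x. \<rho> *\<^sub>R x + snd d i) ` J0 \<subseteq> J0)"

lemma gw_S_Suc_subset:
  assumes "\<And>v. offspring_inside J0 \<rho> (\<omega> v)"
  shows "gw_S J0 \<rho> \<omega> (Suc k) \<subseteq> gw_S J0 \<rho> \<omega> k"
proof
  fix y assume "y \<in> gw_S J0 \<rho> \<omega> (Suc k)"
  then obtain v i x where v: "v \<in> gw_nodes \<rho> \<omega> k" "i < fst (\<omega> v)" and x: "x \<in> J0"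
    and y: "y = (\<rho> ^ Suc k) *\<^sub>R x + gw_offset \<rho> \<omega> (i # v)"
    unfolding gw_S_eq gw_nodes_Suc by auto
  have "\<rho> *\<^sub>R x + snd (\<omega> v) i \<in> J0"
    using assms v x unfolding offspring_inside_def by auto
  moreover have "y = (\<rho> ^ k) *\<^sub>R (\<rho> *\<^sub>R x + snd (\<omega> v) i) + gw_offset \<rho> \<omega> v"
    using y v by (simp add: gw_nodes_eq algebra_simps)
  ultimately show "y \<in> gw_S J0 \<rho> \<omega> k"
    using v unfolding gw_S_eq by auto
qed

lemma gw_S_subset:
  assumes "\<And>v. offspring_inside J0 \<rho> (\<omega> v)"
  shows "gw_S J0 \<rho> \<omega> k \<subseteq> J0"
proof (induction k)
  case 0
  then show ?case by (auto simp: gw_S_eq gw_nodes_0)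
next
  case (Suc k)
  have "gw_S J0 \<rho> \<omega> (Suc k) \<subseteq> gw_S J0 \<rho> \<omega> k"
    by (rule gw_S_Suc_subset) (rule assms)
  with Suc show ?case by blast
qed

lemma compact_gw_S: "compact J0 \<Longrightarrow> compact (gw_S J0 \<rho> \<omega> k)"
  unfolding gw_S_eq
  by (intro compact_UN finite_gw_nodes compact_continuous_image continuous_intros)

section \<open>Projections and Favard length\<close>

lemma abs_sin_diff_le:
  fixes a b :: real
  shows "\<bar>sin a - sin b\<bar> \<le> \<bar>a - b\<bar>"
proof -
  have "\<bar>sin a - sin b\<bar> = 2 * \<bar>sin ((a - b) / 2)\<bar> * \<bar>cos ((a + b) / 2)\<bar>"
    by (simp add: sin_diff_sin abs_mult)
  also have "\<dots> \<le> 2 * \<bar>(a - b) / 2\<bar> * 1"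
    by (intro mult_mono abs_sin_x_le_abs_x) auto
  finally show ?thesis by simp
qed

lemma abs_cos_diff_le:
  fixes a b :: real
  shows "\<bar>cos a - cos b\<bar> \<le> \<bar>a - b\<bar>"
proof -
  have "\<bar>cos a - cos b\<bar> = 2 * \<bar>sin ((a + b) / 2)\<bar> * \<bar>sin ((b - a) / 2)\<bar>"
    by (simp add: cos_diff_cos abs_mult)
  also have "\<dots> \<le> 2 * 1 * \<bar>(b - a) / 2\<bar>"
    by (intro mult_mono abs_sin_x_le_abs_x) auto
  finally show ?thesis by simp
qed

lemma proj_affine: "proj \<theta> (r *\<^sub>R x + b) = r * proj \<theta> x + proj \<theta> b"
  by (simp add: proj_def algebra_simps)

lemma proj_diff: "proj \<theta> (x - y) = proj \<theta> x - proj \<theta> y"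
  by (simp add: proj_def algebra_simps)

lemma abs_proj_le: "\<bar>proj \<theta> x\<bar> \<le> 2 * norm x"
proof -
  have "\<bar>proj \<theta> x\<bar> \<le> \<bar>sin \<theta>\<bar> * \<bar>x $ 1\<bar> + \<bar>cos \<theta>\<bar> * \<bar>x $ 2\<bar>"
    unfolding proj_def using abs_triangle_ineq[of "- sin \<theta> * x $ 1" "cos \<theta> * x $ 2"] by (simp add: abs_mult)
  also have "\<dots> \<le> 1 * norm x + 1 * norm x"
    by (intro add_mono mult_mono component_le_norm_cart) auto
  finally show ?thesis by simp
qed

lemma abs_proj_diff_angle_le: "\<bar>proj \<theta>' x - proj \<theta> x\<bar> \<le> 2 * \<bar>\<theta>' - \<theta>\<bar> * norm x"
proof -
  have "proj \<theta>' x - proj \<theta> x = - (sin \<theta>' - sin \<theta>) * x $ 1 + (cos \<theta>' - cos \<theta>) * x $ 2"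
    unfolding proj_def by (simp add: algebra_simps)
  then have "\<bar>proj \<theta>' x - proj \<theta> x\<bar> \<le> \<bar>sin \<theta>' - sin \<theta>\<bar> * \<bar>x $ 1\<bar> + \<bar>cos \<theta>' - cos \<theta>\<bar> * \<bar>x $ 2\<bar>"
    using abs_triangle_ineq[of "- (sin \<theta>' - sin \<theta>) * x $ 1" "(cos \<theta>' - cos \<theta>) * x $ 2"]
    by (simp only: abs_mult abs_minus_cancel)
  also have "\<dots> \<le> \<bar>\<theta>' - \<theta>\<bar> * norm x + \<bar>\<theta>' - \<theta>\<bar> * norm x"
    by (intro add_mono mult_mono component_le_norm_cart abs_sin_diff_le abs_cos_diff_le) auto
  finally show ?thesis by (simp add: algebra_simps)
qed

lemma continuous_on_proj [continuous_intros]: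
  "continuous_on S f \<Longrightarrow> continuous_on S (\<lambda>x. proj \<theta> (f x))"
  unfolding proj_def by (intro continuous_intros)

lemma compact_proj_image: "compact A \<Longrightarrow> compact (proj \<theta> ` A)"
  by (intro compact_continuous_image continuous_intros)

lemma proj_image_near:
  assumes near: "\<forall>y\<in>B. \<exists>z\<in>A. dist y z < d" and bound: "\<forall>z\<in>A. norm z \<le> R"
    and angle: "\<bar>\<theta>' - \<theta>\<bar> < d"
  shows "\<forall>p\<in>proj \<theta>' ` B. \<exists>q\<in>proj \<theta> ` A. dist p q < 2 * d * (1 + R)"
proof
  fix p assume "p \<in> proj \<theta>' ` B"
  then obtain y z where yz: "p = proj \<theta>' y" "z \<in> A" "dist y z < d"
    using near by blast
  have "dist p (proj \<theta> z) \<le> \<bar>proj \<theta>' (y - z)\<bar> + \<bar>proj \<theta>' z - proj \<theta> z\<bar>"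
    unfolding yz dist_real_def proj_diff by linarith
  also have "\<dots> \<le> 2 * norm (y - z) + 2 * \<bar>\<theta>' - \<theta>\<bar> * norm z"
    by (intro add_mono abs_proj_le abs_proj_diff_angle_le)
  also have "\<dots> < 2 * d + 2 * d * R"
  proof (rule add_less_le_mono)
    show "2 * norm (y - z) < 2 * d" using yz by (simp add: dist_norm)
    show "2 * \<bar>\<theta>' - \<theta>\<bar> * norm z \<le> 2 * d * R"
      using yz bound angle by (intro mult_mono) auto
  qed
  also have "\<dots> = 2 * d * (1 + R)" by (simp add: algebra_simps)
  finally show "\<exists>q\<in>proj \<theta> ` A. dist p q < 2 * d * (1 + R)"
    using yz by blast
qed

lemma decseq_ball_thickening: "decseq (\<lambda>j::nat. \<Union>z\<in>C. ball z (1 / Suc j))"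
proof (rule decseq_SucI)
  fix j :: nat
  have "1 / real (Suc (Suc j)) \<le> 1 / real (Suc j)" by (simp add: frac_le)
  then show "(\<Union>z\<in>C. ball z (1 / Suc (Suc j))) \<subseteq> (\<Union>z\<in>C. ball z (1 / Suc j))"
    by (intro UN_mono subset_ball order_refl)
qed

lemma Inter_ball_thickening:
  fixes C :: "'a::metric_space set"
  assumes "closed C" shows "(\<Inter>j::nat. \<Union>z\<in>C. ball z (1 / Suc j)) = C"
proof
  show "C \<subseteq> (\<Inter>j::nat. \<Union>z\<in>C. ball z (1 / Suc j))"
  proof
    fix x assume "x \<in> C"
    then show "x \<in> (\<Inter>j::nat. \<Union>z\<in>C. ball z (1 / Suc j))" by (intro INT_I UN_I[of x]) auto
  qed
  show "(\<Inter>j::nat. \<Union>z\<in>C. ball z (1 / Suc j)) \<subseteq> C"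
  proof
    fix x assume x: "x \<in> (\<Inter>j::nat. \<Union>z\<in>C. ball z (1 / Suc j))"
    have "x \<in> closure C"
      unfolding closure_approachable
    proof (intro allI impI)
      fix e :: real assume "e > 0"
      then obtain j :: nat where j: "1 / Suc j < e" using nat_approx_posE by blast
      from x have "x \<in> (\<Union>z\<in>C. ball z (1 / Suc j))" by blast
      then obtain z where "z \<in> C" "dist z x < 1 / Suc j" by auto
      then show "\<exists>y\<in>C. dist y x < e" using j by (intro bexI[of _ z]) auto
    qed
    then show "x \<in> C" using assms by (simp add: closure_closed)
  qed
qed

lemma bounded_ball_thickening:
  fixes C :: "'a::real_normed_vector set"
  assumes "bounded C" shows "bounded (\<Union>z\<in>C. ball z (1 / Suc j))"
proof -
  obtain R where R: "\<forall>z\<in>C. norm z \<le> R" using assms bounded_iff by blast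
  have "(\<Union>z\<in>C. ball z (1 / Suc j)) \<subseteq> cball 0 (R + 1)"
  proof
    fix x assume "x \<in> (\<Union>z\<in>C. ball z (1 / Suc j))"
    then obtain z where z: "z \<in> C" "dist z x < 1 / Suc j" by auto
    have "1 / real (Suc j) \<le> 1" by (simp add: field_simps)
    then have "dist z x \<le> 1" using z by linarith
    moreover have "norm x \<le> norm z + dist z x"
      using norm_triangle_sub[of x z] by (simp add: dist_norm norm_minus_commute)
    moreover have "norm z \<le> R" using R z by blast
    ultimately show "x \<in> cball 0 (R + 1)" by simp
  qed
  then show ?thesis using bounded_cball bounded_subset by blast
qed

lemma open_measure_less_upper_hemicontinuous:
  fixes C :: "'a::topological_space \<Rightarrow> real set"
  assumes cpt: "\<And>p. compact (C p)"
    and uhc: "\<And>p e. e > 0 \<Longrightarrow> eventually (\<lambda>q. \<forall>y\<in>C q. \<exists>z\<in>C p. dist y z < e) (nhds p)"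
  shows "open {p. measure lborel (C p) < a}"
proof (subst open_subopen, intro ballI)
  fix p assume "p \<in> {p. measure lborel (C p) < a}"
  then have pa: "measure lborel (C p) < a" by simp
  define T where "T j = (\<Union>z\<in>C p. ball z (1 / Suc j))" for j :: nat
  have "open (T j)" for j
    unfolding T_def by (intro open_UN ballI open_ball)
  then have T_sets: "T j \<in> sets lborel" for j by simp
  have T_finite: "emeasure lborel (T j) \<noteq> \<infinity>" for j
    using emeasure_bounded_finite[OF bounded_ball_thickening[OF compact_imp_bounded[OF cpt]]]
    unfolding T_def by (simp add: top.not_eq_extremum)
  have "(\<lambda>j. measure lborel (T j)) \<longlonglongrightarrow> measure lborel (\<Inter>j. T j)"
  proof (rule Lim_measure_decseq)
    show "range T \<subseteq> sets lborel" using T_sets by auto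
    show "decseq T" unfolding T_def[abs_def] by (rule decseq_ball_thickening)
  qed (rule T_finite)
  then have "(\<lambda>j. measure lborel (T j)) \<longlonglongrightarrow> measure lborel (C p)"
    unfolding T_def Inter_ball_thickening[OF compact_imp_closed[OF cpt]] .
  then obtain j where j: "measure lborel (T j) < a"
    using pa order_tendstoD(2) eventually_sequentially by (metis order_refl)
  have "eventually (\<lambda>q. \<forall>y\<in>C q. \<exists>z\<in>C p. dist y z < 1 / Suc j) (nhds p)"
    by (rule uhc) simp
  then obtain S where S: "open S" "p \<in> S" "\<And>q. q \<in> S \<Longrightarrow> \<forall>y\<in>C q. \<exists>z\<in>C p. dist y z < 1 / Suc j"
    unfolding eventually_nhds by blast
  have "measure lborel (C q) < a" if "q \<in> S" for q
  proof -
    have "C q \<subseteq> T j"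
      using S(3)[OF that] unfolding T_def by (force simp: dist_commute)
    moreover have "T j \<in> fmeasurable lborel"
      using T_sets T_finite by (intro fmeasurableI) (auto simp: top.not_eq_extremum)
    ultimately have "measure lborel (C q) \<le> measure lborel (T j)"
      using cpt[of q] by (intro measure_mono_fmeasurable) (auto simp: borel_compact)
    then show ?thesis using j by simp
  qed
  then show "\<exists>T. open T \<and> p \<in> T \<and> T \<subseteq> {p. measure lborel (C p) < a}"
    using S by blast
qed

lemma borel_measurable_measure_upper_hemicontinuous:
  fixes C :: "'a::topological_space \<Rightarrow> real set"
  assumes "\<And>p. compact (C p)"
    and "\<And>p e. e > 0 \<Longrightarrow> eventually (\<lambda>q. \<forall>y\<in>C q. \<exists>z\<in>C p. dist y z < e) (nhds p)"
  shows "(\<lambda>p. measure lborel (C p)) \<in> borel_measurable borel"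
  unfolding borel_measurable_iff_less
  using open_measure_less_upper_hemicontinuous[OF assms] by simp

definition proj_length :: "real \<Rightarrow> (real^2) set \<Rightarrow> real" where
  "proj_length \<theta> A = measure lborel (proj \<theta> ` A)"

lemma Fav_proj_length: "Fav A = (LINT \<theta>:{0..pi}|lborel. proj_length \<theta> A)"
  unfolding Fav_def proj_length_def ..

lemma borel_measurable_proj_length:
  assumes "compact A"
  shows "(\<lambda>\<theta>. proj_length \<theta> A) \<in> borel_measurable borel"
  unfolding proj_length_def
proof (rule borel_measurable_measure_upper_hemicontinuous)
  show "compact (proj \<theta> ` A)" for \<theta> using assms by (rule compact_proj_image)
  obtain R where R: "R > 0" "\<forall>x\<in>A. norm x \<le> R"
    using compact_imp_bounded[OF assms] bounded_pos by blast
  fix \<theta> e :: real assume "e > 0"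
  define d where "d = e / (2 * (1 + R))"
  have "d > 0" "2 * d * (1 + R) = e" using \<open>e > 0\<close> R by (simp_all add: d_def field_simps)
  have "\<forall>p\<in>proj \<theta>' ` A. \<exists>q\<in>proj \<theta> ` A. dist p q < e" if "dist \<theta>' \<theta> < d" for \<theta>'
  proof -
    have "\<forall>y\<in>A. \<exists>z\<in>A. dist y z < d"
      using \<open>d > 0\<close> by (metis dist_self)
    then show ?thesis
      using proj_image_near[of A A d R \<theta>' \<theta>] that R(2) \<open>2 * d * (1 + R) = e\<close>
      by (simp add: dist_real_def)
  qed
  then show "eventually (\<lambda>\<theta>'. \<forall>p\<in>proj \<theta>' ` A. \<exists>q\<in>proj \<theta> ` A. dist p q < e) (nhds \<theta>)"
    unfolding eventually_nhds_metric using \<open>d > 0\<close> by blast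
qed

lemma proj_length_nonneg: "0 \<le> proj_length \<theta> A"
  unfolding proj_length_def by simp

lemma proj_length_le:
  assumes "compact A" "0 \<le> R" "\<forall>x\<in>A. norm x \<le> R"
  shows "proj_length \<theta> A \<le> 4 * R"
proof -
  have "proj \<theta> ` A \<subseteq> {-2 * R..2 * R}"
  proof
    fix y assume "y \<in> proj \<theta> ` A"
    then obtain x where "x \<in> A" "y = proj \<theta> x" by auto
    then have "\<bar>y\<bar> \<le> 2 * R" using abs_proj_le[of \<theta> x] assms(3) by fastforce
    then show "y \<in> {-2 * R..2 * R}" by (simp add: abs_le_iff)
  qed
  then have "proj_length \<theta> A \<le> measure lborel {-2 * R..2 * R}"
    unfolding proj_length_def using compact_proj_image[OF assms(1)]
    by (intro measure_mono_fmeasurable) (auto simp: borel_compact fmeasurable_compact)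
  also have "\<dots> = 4 * R" using assms(2) by simp
  finally show ?thesis .
qed

lemma set_integrable_proj_length:
  assumes "compact A"
  shows "set_integrable lborel {0..pi} (\<lambda>\<theta>. proj_length \<theta> A)"
proof -
  obtain R where R: "R > 0" "\<forall>x\<in>A. norm x \<le> R"
    using compact_imp_bounded[OF assms] bounded_pos by blast
  show ?thesis
    unfolding set_integrable_def
    by (rule integrableI_bounded_set_indicator[where B="4 * R"])
       (use borel_measurable_proj_length[OF assms] proj_length_le[OF assms _ R(2)] R(1) proj_length_nonneg
        in auto)
qed

lemma Fav_nonneg: "0 \<le> Fav A"
  unfolding Fav_proj_length set_lebesgue_integral_def
  by (intro Bochner_Integration.integral_nonneg) (auto simp: proj_length_nonneg indicator_def)

lemma Fav_mono:
  assumes "compact B" "A \<subseteq> B" "compact A"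
  shows "Fav A \<le> Fav B"
  unfolding Fav_proj_length proj_length_def
  using assms by (intro set_integral_mono set_integrable_proj_length[unfolded proj_length_def]
    measure_mono_fmeasurable image_mono) (auto simp: borel_compact fmeasurable_compact compact_proj_image)

lemma Fav_UN_le:
  assumes "finite V" "\<And>v. v \<in> V \<Longrightarrow> compact (A v)"
  shows "Fav (\<Union>v\<in>V. A v) \<le> (\<Sum>v\<in>V. Fav (A v))"
proof -
  have int: "set_integrable lborel {0..pi} (\<lambda>\<theta>. proj_length \<theta> (A v))" if "v \<in> V" for v
    using assms(2)[OF that] by (rule set_integrable_proj_length)
  have "Fav (\<Union>v\<in>V. A v) \<le> (LINT \<theta>:{0..pi}|lborel. (\<Sum>v\<in>V. proj_length \<theta> (A v)))"
    unfolding Fav_proj_length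
  proof (rule set_integral_mono)
    show "set_integrable lborel {0..pi} (\<lambda>\<theta>. proj_length \<theta> (\<Union>v\<in>V. A v))"
      using assms by (intro set_integrable_proj_length compact_UN) auto
    show "set_integrable lborel {0..pi} (\<lambda>\<theta>. \<Sum>v\<in>V. proj_length \<theta> (A v))"
      unfolding set_integrable_def scaleR_sum_right
      using int unfolding set_integrable_def by (rule Bochner_Integration.integrable_sum)
    show "proj_length \<theta> (\<Union>v\<in>V. A v) \<le> (\<Sum>v\<in>V. proj_length \<theta> (A v))" for \<theta>
      unfolding proj_length_def image_UN
      using assms by (intro measure_UNION_le) (auto simp: borel_compact compact_proj_image)
  qed
  also have "\<dots> = (\<Sum>v\<in>V. Fav (A v))"
    unfolding Fav_proj_length set_lebesgue_integral_def scaleR_sum_right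
    using int unfolding set_integrable_def by (rule Bochner_Integration.integral_sum)
  finally show ?thesis .
qed

lemma proj_length_affine:
  assumes "compact A" "r > 0"
  shows "proj_length \<theta> ((\<lambda>x. r *\<^sub>R x + b) ` A) = r * proj_length \<theta> A"
proof -
  let ?P = "proj \<theta> ` A" and ?f = "\<lambda>t. r *\<^sub>R t + proj \<theta> b"
  have P: "compact ?P" using assms(1) by (rule compact_proj_image)
  have image: "proj \<theta> ` (\<lambda>x. r *\<^sub>R x + b) ` A = ?f ` ?P"
    by (simp add: image_image proj_affine)
  have "compact (?f ` ?P)"
    by (intro compact_continuous_image[OF _ P] continuous_intros)
  then have "measure lborel (?f ` ?P) = measure lebesgue (?f ` ?P)"
    by (intro measure_completion[symmetric]) (simp add: borel_compact)
  also have "\<dots> = \<bar>r\<bar> ^ DIM(real) * measure lebesgue ?P" by (rule measure_lebesgue_affine)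
  also have "\<dots> = r * measure lborel ?P" using P assms(2) by (simp add: borel_compact)
  finally show ?thesis unfolding proj_length_def image .
qed

lemma Fav_affine:
  assumes "compact A" "r > 0"
  shows "Fav ((\<lambda>x. r *\<^sub>R x + b) ` A) = r * Fav A"
  unfolding Fav_proj_length proj_length_affine[OF assms] set_lebesgue_integral_def
  by (simp add: integral_mult_right_zero[symmetric] ac_simps del: integral_mult_right_zero)

section \<open>Dependence on the realization\<close>

lemma tendsto_component_nhds: "((\<lambda>\<omega>::gw_realization. \<omega> v) \<longlongrightarrow> \<omega> v) (nhds \<omega>)"
  using continuous_on_def[of UNIV "\<lambda>\<omega>::gw_realization. \<omega> v"] tendsto_at_iff_tendsto_nhds
  by fastforce

lemma eventually_nhds_fst_component_eq:
  "eventually (\<lambda>\<omega>'::gw_realization. fst (\<omega>' v) = fst (\<omega> v)) (nhds \<omega>)"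
proof -
  have "((\<lambda>\<omega>'::gw_realization. fst (\<omega>' v)) \<longlongrightarrow> fst (\<omega> v)) (nhds \<omega>)"
    by (intro tendsto_fst tendsto_component_nhds)
  then have "eventually (\<lambda>\<omega>'::gw_realization. fst (\<omega>' v) \<in> {fst (\<omega> v)}) (nhds \<omega>)"
    by (rule topological_tendstoD) (simp_all add: discrete_topology_class.open_discrete)
  then show ?thesis by simp
qed

lemma tendsto_gw_offset_nhds: "((\<lambda>\<omega>'. gw_offset \<rho> \<omega>' v) \<longlongrightarrow> gw_offset \<rho> \<omega> v) (nhds \<omega>)"
proof (induction v)
  case Nil
  then show ?case by simp
next
  case (Cons i v)
  have "((\<lambda>\<omega>'::gw_realization. snd (\<omega>' v)) \<longlongrightarrow> snd (\<omega> v)) (nhds \<omega>)"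
    by (intro tendsto_snd tendsto_component_nhds)
  moreover have "continuous_on UNIV (\<lambda>f::nat \<Rightarrow> real^2. f i)" by simp
  ultimately have "((\<lambda>\<omega>'::gw_realization. snd (\<omega>' v) i) \<longlongrightarrow> snd (\<omega> v) i) (nhds \<omega>)"
    using continuous_on_tendsto_compose[of UNIV "\<lambda>f::nat \<Rightarrow> real^2. f i"] by fastforce
  then show ?case using Cons by (simp add: tendsto_intros)
qed

lemma eventually_nhds_gw_nodes_eq:
  "eventually (\<lambda>\<omega>'. gw_nodes \<rho> \<omega>' k = gw_nodes \<rho> \<omega> k) (nhds \<omega>)"
proof (induction k)
  case 0
  then show ?case by (simp add: gw_nodes_0)
next
  case (Suc k)
  have "eventually (\<lambda>\<omega>'. \<forall>v\<in>gw_nodes \<rho> \<omega> k. fst (\<omega>' v) = fst (\<omega> v)) (nhds \<omega>)"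
    by (intro eventually_ball_finite finite_gw_nodes ballI eventually_nhds_fst_component_eq)
  with Suc show ?case
    by eventually_elim (simp add: gw_nodes_Suc)
qed

text \<open>The pieces of generation \<open>k\<close> move continuously with the realization, while the
  combinatorial structure of the first \<open>k\<close> generations is locally constant.\<close>
lemma eventually_nhds_gw_S_near:
  assumes "d > 0"
  shows "eventually (\<lambda>\<omega>'. \<forall>y\<in>gw_S J0 \<rho> \<omega>' k. \<exists>z\<in>gw_S J0 \<rho> \<omega> k. dist y z < d) (nhds \<omega>)"
proof -
  have "eventually (\<lambda>\<omega>'. \<forall>v\<in>gw_nodes \<rho> \<omega> k. dist (gw_offset \<rho> \<omega>' v) (gw_offset \<rho> \<omega> v) < d) (nhds \<omega>)"
    using tendsto_gw_offset_nhds assms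
    by (intro eventually_ball_finite finite_gw_nodes ballI) (auto simp: tendsto_iff)
  with eventually_nhds_gw_nodes_eq[of \<rho> k \<omega>]
  show ?thesis
  proof eventually_elim
    case (elim \<omega>')
    show ?case
    proof
      fix y assume "y \<in> gw_S J0 \<rho> \<omega>' k"
      then obtain v x where "v \<in> gw_nodes \<rho> \<omega> k" "x \<in> J0" "y = (\<rho> ^ k) *\<^sub>R x + gw_offset \<rho> \<omega>' v"
        using elim unfolding gw_S_eq by auto
      with elim show "\<exists>z\<in>gw_S J0 \<rho> \<omega> k. dist y z < d"
        unfolding gw_S_eq by (intro bexI[of _ "(\<rho> ^ k) *\<^sub>R x + gw_offset \<rho> \<omega> v"]) (auto simp: dist_norm)
    qed
  qed
qed

lemma borel_measurable_proj_length_gw_S: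
  assumes "compact J0"
  shows "(\<lambda>q::gw_realization \<times> real. proj_length (snd q) (gw_S J0 \<rho> (fst q) k)) \<in> borel_measurable borel"
  unfolding proj_length_def
proof (rule borel_measurable_measure_upper_hemicontinuous)
  show "compact (proj (snd q) ` gw_S J0 \<rho> (fst q) k)" for q
    by (intro compact_proj_image compact_gw_S assms)
  fix q :: "gw_realization \<times> real" and e :: real assume "e > 0"
  obtain \<omega> \<theta> where q: "q = (\<omega>, \<theta>)" by fastforce
  obtain R where R: "R > 0" "\<forall>z\<in>gw_S J0 \<rho> \<omega> k. norm z \<le> R"
    using compact_imp_bounded[OF compact_gw_S[OF assms]] bounded_pos by blast
  define d where "d = e / (2 * (1 + R))"
  have "d > 0" "2 * d * (1 + R) = e" using \<open>e > 0\<close> R by (simp_all add: d_def field_simps)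
  have "eventually (\<lambda>\<omega>'. \<forall>y\<in>gw_S J0 \<rho> \<omega>' k. \<exists>z\<in>gw_S J0 \<rho> \<omega> k. dist y z < d) (nhds \<omega>)"
    using \<open>d > 0\<close> by (rule eventually_nhds_gw_S_near)
  moreover have "eventually (\<lambda>\<theta>'. \<bar>\<theta>' - \<theta>\<bar> < d) (nhds \<theta>)"
    using \<open>d > 0\<close> by (auto simp: eventually_nhds_metric dist_real_def)
  ultimately have "eventually (\<lambda>q'. (\<forall>y\<in>gw_S J0 \<rho> (fst q') k. \<exists>z\<in>gw_S J0 \<rho> \<omega> k. dist y z < d)
      \<and> \<bar>snd q' - \<theta>\<bar> < d) (nhds (\<omega>, \<theta>))"
    unfolding nhds_prod by (rule eventually_prodI)
  then show "eventually (\<lambda>q'. \<forall>y\<in>proj (snd q') ` gw_S J0 \<rho> (fst q') k.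
                     \<exists>z\<in>proj (snd q) ` gw_S J0 \<rho> (fst q) k. dist y z < e) (nhds q)"
    unfolding q
  proof (rule eventually_mono)
    fix q' :: "gw_realization \<times> real"
    assume "(\<forall>y\<in>gw_S J0 \<rho> (fst q') k. \<exists>z\<in>gw_S J0 \<rho> \<omega> k. dist y z < d) \<and> \<bar>snd q' - \<theta>\<bar> < d"
    then show "\<forall>y\<in>proj (snd q') ` gw_S J0 \<rho> (fst q') k. \<exists>z\<in>proj (snd (\<omega>, \<theta>)) ` gw_S J0 \<rho> (fst (\<omega>, \<theta>)) k. dist y z < e"
      using proj_image_near[of "gw_S J0 \<rho> (fst q') k" "gw_S J0 \<rho> \<omega> k" d R "snd q'" \<theta>] R(2)
        \<open>2 * d * (1 + R) = e\<close>
      by simp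
  qed
qed

lemma borel_measurable_Fav_gw_S:
  assumes "compact J0"
  shows "(\<lambda>\<omega>. Fav (gw_S J0 \<rho> \<omega> k)) \<in> borel_measurable borel"
proof -
  have "sets (borel \<Otimes>\<^sub>M lborel) = sets (borel \<Otimes>\<^sub>M (borel :: real measure))"
    by (intro sets_pair_measure_cong) auto
  also have "\<dots> = sets (borel :: (gw_realization \<times> real) measure)"
    by (simp only: borel_prod)
  finally have sets_eq: "sets (borel \<Otimes>\<^sub>M lborel) = sets (borel :: (gw_realization \<times> real) measure)" .
  have "(\<lambda>q::gw_realization \<times> real. indicator {0..pi} (snd q) *\<^sub>R proj_length (snd q) (gw_S J0 \<rho> (fst q) k))
      \<in> borel_measurable borel"
  proof (rule borel_measurable_scaleR)
    have "(\<lambda>q::gw_realization \<times> real. snd q) \<in> borel_measurable borel"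
      by (intro borel_measurable_continuous_onI continuous_intros)
    then show "(\<lambda>q::gw_realization \<times> real. indicator {0..pi} (snd q) :: real) \<in> borel_measurable borel"
      using measurable_comp[of snd borel borel "indicator {0..pi}" borel] by (simp add: o_def)
  qed (rule borel_measurable_proj_length_gw_S[OF assms])
  then have "(\<lambda>q::gw_realization \<times> real. indicator {0..pi} (snd q) *\<^sub>R proj_length (snd q) (gw_S J0 \<rho> (fst q) k))
      \<in> borel_measurable (borel \<Otimes>\<^sub>M lborel)"
    using measurable_cong_sets[OF sets_eq refl] by blast
  then have "(\<lambda>\<omega>. \<integral>\<theta>. indicator {0..pi} \<theta> *\<^sub>R proj_length \<theta> (gw_S J0 \<rho> \<omega> k) \<partial>lborel) \<in> borel_measurable borel"
    by (intro lborel.borel_measurable_lebesgue_integral) (simp add: case_prod_beta')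
  then show ?thesis unfolding Fav_proj_length set_lebesgue_integral_def .
qed

lemma borel_measurable_gw_Z: "(\<lambda>\<omega>. gw_Z \<rho> \<omega> m) \<in> borel_measurable borel"
proof (intro borel_measurable_continuous_onI continuous_on_def[THEN iffD2] ballI)
  fix \<omega> :: gw_realization
  have "eventually (\<lambda>\<omega>'. gw_Z \<rho> \<omega>' m = gw_Z \<rho> \<omega> m) (nhds \<omega>)"
    using eventually_nhds_gw_nodes_eq[of \<rho> m \<omega>] by (rule eventually_mono) (simp add: gw_Z_def)
  then show "((\<lambda>\<omega>. gw_Z \<rho> \<omega> m) \<longlongrightarrow> gw_Z \<rho> \<omega> m) (at \<omega> within UNIV)"
    by (intro tendsto_eventually filter_leD[OF at_within_le_nhds])
qed

lemma Fav_gw_S_add_le: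
  assumes "compact J0" "\<rho> > 0"
  shows "Fav (gw_S J0 \<rho> \<omega> (k + m)) \<le> (\<Sum>v\<in>gw_nodes \<rho> \<omega> m. \<rho> ^ m * Fav (gw_S J0 \<rho> (gw_subtree v \<omega>) k))"
proof -
  have "Fav (gw_S J0 \<rho> \<omega> (k + m)) \<le>
      (\<Sum>v\<in>gw_nodes \<rho> \<omega> m. Fav ((\<lambda>y. (\<rho> ^ m) *\<^sub>R y + gw_offset \<rho> \<omega> v) ` gw_S J0 \<rho> (gw_subtree v \<omega>) k))"
    unfolding gw_S_add
    by (intro Fav_UN_le finite_gw_nodes compact_continuous_image continuous_intros compact_gw_S assms(1))
  also have "\<dots> = (\<Sum>v\<in>gw_nodes \<rho> \<omega> m. \<rho> ^ m * Fav (gw_S J0 \<rho> (gw_subtree v \<omega>) k))"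
    using assms by (intro sum.cong refl Fav_affine compact_gw_S) simp_all
  finally show ?thesis .
qed

section \<open>Splitting infinite product measures\<close>

lemma merge_vimage_prod_emb:
  assumes IJ: "I \<inter> J = {}" and F: "F \<subseteq> I \<union> J"
  shows "merge I J -` prod_emb (I \<union> J) M F (Pi\<^sub>E F A) \<inter> space (PiM I M \<Otimes>\<^sub>M PiM J M) =
    prod_emb I M (F \<inter> I) (Pi\<^sub>E (F \<inter> I) A) \<times> prod_emb J M (F \<inter> J) (Pi\<^sub>E (F \<inter> J) A)"
proof (intro set_eqI iffI)
  fix p assume p: "p \<in> merge I J -` prod_emb (I \<union> J) M F (Pi\<^sub>E F A) \<inter> space (PiM I M \<Otimes>\<^sub>M PiM J M)"
  obtain x y where xy: "p = (x, y)" by (cases p)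
  from p xy have x: "x \<in> extensional I" "\<forall>i\<in>I. x i \<in> space (M i)"
    and y: "y \<in> extensional J" "\<forall>i\<in>J. y i \<in> space (M i)"
    and m: "\<forall>i\<in>F. merge I J (x, y) i \<in> A i"
    by (auto simp: space_pair_measure space_PiM PiE_iff prod_emb_iff)
  have "\<forall>i\<in>F \<inter> I. x i \<in> A i"
    using m by (auto simp: merge_def)
  moreover have "\<forall>i\<in>F \<inter> J. y i \<in> A i"
  proof
    fix i assume i: "i \<in> F \<inter> J"
    then have "i \<notin> I" using IJ by auto
    then show "y i \<in> A i" using m[rule_format, of i] i by (simp add: merge_def)
  qed
  ultimately show "p \<in> prod_emb I M (F \<inter> I) (Pi\<^sub>E (F \<inter> I) A) \<times> prod_emb J M (F \<inter> J) (Pi\<^sub>E (F \<inter> J) A)"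
    using x y xy by (auto simp: prod_emb_iff PiE_iff extensional_def)
next
  fix p assume p: "p \<in> prod_emb I M (F \<inter> I) (Pi\<^sub>E (F \<inter> I) A) \<times> prod_emb J M (F \<inter> J) (Pi\<^sub>E (F \<inter> J) A)"
  obtain x y where xy: "p = (x, y)" by (cases p)
  from p xy have x: "x \<in> extensional I" "\<forall>i\<in>F \<inter> I. x i \<in> A i" "\<forall>i\<in>I. x i \<in> space (M i)"
    and y: "y \<in> extensional J" "\<forall>i\<in>F \<inter> J. y i \<in> A i" "\<forall>i\<in>J. y i \<in> space (M i)"
    by (auto simp: prod_emb_iff PiE_iff)
  have "merge I J (x, y) \<in> prod_emb (I \<union> J) M F (Pi\<^sub>E F A)"
    using x y F by (auto simp: prod_emb_iff PiE_iff merge_def extensional_def)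
  moreover have "p \<in> space (PiM I M \<Otimes>\<^sub>M PiM J M)"
    using x y xy by (auto simp: space_pair_measure space_PiM PiE_iff)
  ultimately show "p \<in> merge I J -` prod_emb (I \<union> J) M F (Pi\<^sub>E F A) \<inter> space (PiM I M \<Otimes>\<^sub>M PiM J M)"
    using xy by simp
qed

lemma distr_merge_PiM:
  fixes I J :: "'i set" and M :: "'i \<Rightarrow> 'a measure"
  assumes M: "\<And>i. prob_space (M i)" and IJ: "I \<inter> J = {}"
  shows "distr (PiM I M \<Otimes>\<^sub>M PiM J M) (PiM (I \<union> J) M) (merge I J) = PiM (I \<union> J) M"
proof (rule measure_eqI_PiM_infinite[symmetric, OF refl])
  interpret P1: prob_space "PiM I M" using M by (rule prob_space_PiM)
  interpret P2: prob_space "PiM J M" using M by (rule prob_space_PiM)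
  interpret PU: prob_space "PiM (I \<union> J) M" using M by (rule prob_space_PiM)
  show "finite_measure (PiM (I \<union> J) M)" by unfold_locales
  fix A F assume F: "finite F" "F \<subseteq> I \<union> J" and A: "\<And>i. i \<in> F \<Longrightarrow> A i \<in> sets (M i)"
  let ?X = "prod_emb (I \<union> J) M F (Pi\<^sub>E F A)"
  have "emeasure (PiM (I \<union> J) M) ?X = (\<Prod>i\<in>F. emeasure (M i) (A i))"
    using F A M by (intro emeasure_PiM_emb) auto
  also have "\<dots> = (\<Prod>i\<in>F \<inter> I. emeasure (M i) (A i)) * (\<Prod>i\<in>F \<inter> J. emeasure (M i) (A i))"
  proof -
    have "F = (F \<inter> I) \<union> (F \<inter> J)" using F by auto
    then show ?thesis using IJ F by (subst prod.union_disjoint[symmetric]) auto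
  qed
  also have "\<dots> = emeasure (PiM I M) (prod_emb I M (F \<inter> I) (Pi\<^sub>E (F \<inter> I) A)) *
                  emeasure (PiM J M) (prod_emb J M (F \<inter> J) (Pi\<^sub>E (F \<inter> J) A))"
    using F A M by (subst (1 2) emeasure_PiM_emb) auto
  also have "\<dots> = emeasure (PiM I M \<Otimes>\<^sub>M PiM J M)
      (prod_emb I M (F \<inter> I) (Pi\<^sub>E (F \<inter> I) A) \<times> prod_emb J M (F \<inter> J) (Pi\<^sub>E (F \<inter> J) A))"
    using F A by (intro P2.emeasure_pair_measure_Times[symmetric] sets_PiM_I) auto
  also have "\<dots> = emeasure (distr (PiM I M \<Otimes>\<^sub>M PiM J M) (PiM (I \<union> J) M) (merge I J)) ?X"
    using F A IJ
    by (subst emeasure_distr) (auto intro!: sets_PiM_I simp: merge_vimage_prod_emb)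
  finally show "emeasure (PiM (I \<union> J) M) ?X = emeasure (distr (PiM I M \<Otimes>\<^sub>M PiM J M) (PiM (I \<union> J) M) (merge I J)) ?X" .
qed simp

lemma nn_integral_PiM_merge:
  fixes I J :: "'i set" and M :: "'i \<Rightarrow> 'a measure"
  assumes M: "\<And>i. prob_space (M i)" and IJ: "I \<inter> J = {}"
    and f[measurable]: "f \<in> borel_measurable (PiM (I \<union> J) M)"
  shows "(\<integral>\<^sup>+\<omega>. f \<omega> \<partial>PiM (I \<union> J) M) = (\<integral>\<^sup>+x. \<integral>\<^sup>+y. f (merge I J (x, y)) \<partial>PiM J M \<partial>PiM I M)"
proof -
  interpret P2: prob_space "PiM J M" using M by (rule prob_space_PiM)
  have "(\<integral>\<^sup>+\<omega>. f \<omega> \<partial>PiM (I \<union> J) M) = (\<integral>\<^sup>+\<omega>. f \<omega> \<partial>distr (PiM I M \<Otimes>\<^sub>M PiM J M) (PiM (I \<union> J) M) (merge I J))"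
    by (simp add: distr_merge_PiM[OF M IJ])
  also have "\<dots> = (\<integral>\<^sup>+p. f (merge I J p) \<partial>(PiM I M \<Otimes>\<^sub>M PiM J M))"
    by (rule nn_integral_distr) measurable
  also have "\<dots> = (\<integral>\<^sup>+x. \<integral>\<^sup>+y. f (merge I J (x, y)) \<partial>PiM J M \<partial>PiM I M)"
    by (rule P2.nn_integral_fst[symmetric]) measurable
  finally show ?thesis .
qed

lemma indep_vars_PiM_components:
  fixes K :: "'i set" and M :: "'i \<Rightarrow> 'a measure"
  assumes M: "\<And>i. prob_space (M i)" and K: "K \<noteq> {}"
  shows "prob_space.indep_vars (PiM K M) M (\<lambda>i \<omega>. \<omega> i) K"
proof -
  interpret P: prob_space "PiM K M" using M by (rule prob_space_PiM)
  have "distr (PiM K M) (PiM K M) (\<lambda>\<omega>. \<lambda>i\<in>K. \<omega> i) = distr (PiM K M) (PiM K M) (\<lambda>\<omega>. \<omega>)"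
    by (intro distr_cong) (auto simp: space_PiM)
  also have "\<dots> = (\<Pi>\<^sub>M i\<in>K. distr (PiM K M) (M i) (\<lambda>\<omega>. \<omega> i))"
    using M by (auto intro!: PiM_cong simp: distr_PiM_component)
  finally show ?thesis
    using K by (subst P.indep_vars_iff_distr_eq_PiM') auto
qed

lemma indep_vars_PiM_blocks:
  fixes I :: "'i set" and M :: "'i \<Rightarrow> 'a measure" and K :: "'j \<Rightarrow> 'i set"
  assumes M: "\<And>i. prob_space (M i)" and I: "I \<noteq> {}"
    and K: "\<And>j. j \<in> L \<Longrightarrow> K j \<subseteq> I" "disjoint_family_on K L"
    and f: "\<And>j. j \<in> L \<Longrightarrow> f j \<in> borel_measurable (PiM (K j) M)"
  shows "prob_space.indep_vars (PiM I M) (\<lambda>_. borel) (\<lambda>j \<omega>. f j (restrict \<omega> (K j))) L"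
proof -
  interpret P: prob_space "PiM I M" using M by (rule prob_space_PiM)
  have "P.indep_vars (\<lambda>j. PiM (K j) M) (\<lambda>j \<omega>. restrict (\<lambda>i. \<omega> i) (K j)) L"
    using indep_vars_PiM_components[OF M I] K by (rule P.indep_vars_restrict)
  then show ?thesis
    using f by (rule P.indep_vars_compose2)
qed

lemma real_cond_exp_le_of_set_integral_le:
  fixes f h :: "'a \<Rightarrow> real"
  assumes "sigma_finite_subalgebra M F"
    and f: "integrable M f" and hF: "h \<in> borel_measurable F" and h: "integrable M h"
    and le: "\<And>G. G \<in> sets F \<Longrightarrow> (\<integral>x\<in>G. f x \<partial>M) \<le> (\<integral>x\<in>G. h x \<partial>M)"
  shows "AE x in M. real_cond_exp M F f x \<le> h x"
proof -
  interpret sigma_finite_subalgebra M F by fact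
  let ?g = "real_cond_exp M F f"
  define E where "E = {x \<in> space M. h x < ?g x}"
  let ?d = "\<lambda>x. indicator E x * (?g x - h x)"
  have "{x \<in> space F. h x < ?g x} \<in> sets F"
    using hF borel_measurable_cond_exp[of M F f] by measurable
  then have EF: "E \<in> sets F"
    using subalg by (simp add: E_def subalgebra_def)
  then have EM: "E \<in> sets M"
    using subalg by (auto simp: subalgebra_def)
  have g: "integrable M ?g" using f by (rule real_cond_exp_int)
  have gE: "integrable M (\<lambda>x. indicator E x * ?g x)" and hE: "integrable M (\<lambda>x. indicator E x * h x)"
    using integrable_mult_indicator[OF EM g] integrable_mult_indicator[OF EM h] by simp_all
  then have d: "integrable M ?d"
    unfolding right_diff_distrib by (rule Bochner_Integration.integrable_diff)
  have d_nonneg: "AE x in M. 0 \<le> ?d x"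
    by (auto simp: E_def indicator_def)
  have "(\<integral>x. ?d x \<partial>M) = (\<integral>x\<in>E. ?g x \<partial>M) - (\<integral>x\<in>E. h x \<partial>M)"
    unfolding right_diff_distrib set_lebesgue_integral_def using gE hE by simp
  also have "\<dots> = (\<integral>x\<in>E. f x \<partial>M) - (\<integral>x\<in>E. h x \<partial>M)"
    using real_cond_exp_intA[OF f EF] by simp
  also have "\<dots> \<le> 0" using le[OF EF] by simp
  finally have "(\<integral>x. ?d x \<partial>M) = 0"
    using integral_nonneg_AE[OF d_nonneg] by linarith
  then have "AE x in M. ?d x = 0"
    using integral_nonneg_eq_0_iff_AE[OF d d_nonneg] by simp
  with AE_space[of M] show ?thesis
    by eventually_elim (auto simp: E_def indicator_def split: if_splits)
qed

lemma emeasure_PiM_restrict_vimage_Int_le: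
  fixes M :: "'i \<Rightarrow> 'a measure" and I :: "'i set" and H :: "('i \<Rightarrow> 'a) \<Rightarrow> ennreal"
  assumes M: "\<And>i. prob_space (M i)"
    and A[measurable]: "A \<in> sets (PiM UNIV M)" and G[measurable]: "G \<in> sets (PiM I M)"
    and H[measurable]: "H \<in> borel_measurable (PiM I M)"
    and slice: "\<And>x. x \<in> space (PiM I M) \<Longrightarrow>
      emeasure (PiM (- I) M) {y \<in> space (PiM (- I) M). merge I (- I) (x, y) \<in> A} \<le> H x"
  shows "emeasure (PiM UNIV M) ((\<lambda>\<omega>. restrict \<omega> I) -` G \<inter> space (PiM UNIV M) \<inter> A)
    \<le> (\<integral>\<^sup>+\<omega>. indicator G (restrict \<omega> I) * H (restrict \<omega> I) \<partial>PiM UNIV M)"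
proof -
  let ?\<Omega> = "PiM UNIV M" and ?M1 = "PiM I M" and ?M2 = "PiM (- I) M" and ?r = "\<lambda>\<omega>. restrict \<omega> I"
  interpret M2: prob_space ?M2 using M by (rule prob_space_PiM)
  have split: "(\<integral>\<^sup>+\<omega>. f \<omega> \<partial>?\<Omega>) = (\<integral>\<^sup>+x. \<integral>\<^sup>+y. f (merge I (- I) (x, y)) \<partial>?M2 \<partial>?M1)"
    if "f \<in> borel_measurable ?\<Omega>" for f
    using nn_integral_PiM_merge[OF M, of I "- I" f] that by simp
  have r[measurable]: "?r \<in> measurable ?\<Omega> ?M1"
    by (rule measurable_restrict_subset) simp
  have restrict_id: "restrict x I = x" if "x \<in> space ?M1" for x
    using that by (simp add: space_PiM PiE_restrict)
  have merge_slice[measurable]: "(\<lambda>y. merge I (- I) (x, y)) \<in> measurable ?M2 ?\<Omega>" if "x \<in> space ?M1" for x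
  proof -
    have "merge I (- I) \<in> measurable (?M1 \<Otimes>\<^sub>M ?M2) ?\<Omega>"
      using measurable_merge[of I "- I" M] by simp
    with measurable_Pair1'[OF that] show ?thesis by (rule measurable_comp[unfolded o_def])
  qed
  have "?r -` G \<inter> space ?\<Omega> \<inter> A \<in> sets ?\<Omega>"
    by measurable
  then have "emeasure ?\<Omega> (?r -` G \<inter> space ?\<Omega> \<inter> A) = (\<integral>\<^sup>+\<omega>. indicator (?r -` G \<inter> space ?\<Omega> \<inter> A) \<omega> \<partial>?\<Omega>)"
    by (rule nn_integral_indicator[symmetric])
  also have "\<dots> = (\<integral>\<^sup>+\<omega>. indicator G (?r \<omega>) * indicator A \<omega> \<partial>?\<Omega>)"
    by (intro nn_integral_cong) (auto split: split_indicator)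
  also have "\<dots> = (\<integral>\<^sup>+x. \<integral>\<^sup>+y. indicator G x * indicator {y \<in> space ?M2. merge I (- I) (x, y) \<in> A} y \<partial>?M2 \<partial>?M1)"
    by (subst split) (auto intro!: nn_integral_cong simp: restrict_id split: split_indicator)
  also have "\<dots> = (\<integral>\<^sup>+x. indicator G x * emeasure ?M2 {y \<in> space ?M2. merge I (- I) (x, y) \<in> A} \<partial>?M1)"
    by (intro nn_integral_cong nn_integral_cmult_indicator) measurable
  also have "\<dots> \<le> (\<integral>\<^sup>+x. indicator G x * H x \<partial>?M1)"
    by (intro nn_integral_mono mult_left_mono slice) auto
  also have "\<dots> = (\<integral>\<^sup>+\<omega>. indicator G (?r \<omega>) * H (?r \<omega>) \<partial>?\<Omega>)"
    by (subst split) (auto intro!: nn_integral_cong simp: restrict_id M2.emeasure_space_1)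
  finally show ?thesis .
qed

lemma measure_PiM_restrict_vimage_Int_le:
  fixes M :: "'i \<Rightarrow> 'a measure" and I :: "'i set" and H :: "('i \<Rightarrow> 'a) \<Rightarrow> real"
  assumes M: "\<And>i. prob_space (M i)"
    and A: "A \<in> sets (PiM UNIV M)" and G: "G \<in> sets (PiM I M)"
    and H: "H \<in> borel_measurable (PiM I M)" "\<And>x. 0 \<le> H x" "\<And>x. H x \<le> 1"
    and slice: "\<And>x. x \<in> space (PiM I M) \<Longrightarrow>
      emeasure (PiM (- I) M) {y \<in> space (PiM (- I) M). merge I (- I) (x, y) \<in> A} \<le> ennreal (H x)"
  shows "measure (PiM UNIV M) ((\<lambda>\<omega>. restrict \<omega> I) -` G \<inter> space (PiM UNIV M) \<inter> A)
    \<le> (\<integral>\<omega>\<in>(\<lambda>\<omega>. restrict \<omega> I) -` G \<inter> space (PiM UNIV M). H (restrict \<omega> I) \<partial>PiM UNIV M)"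
proof -
  let ?\<Omega> = "PiM UNIV M" and ?G = "(\<lambda>\<omega>. restrict \<omega> I) -` G \<inter> space (PiM UNIV M)"
  interpret P: prob_space ?\<Omega> using M by (rule prob_space_PiM)
  have [measurable]: "(\<lambda>\<omega>. restrict \<omega> I) \<in> measurable ?\<Omega> (PiM I M)"
    by (rule measurable_restrict_subset) simp
  note [measurable] = G H(1)
  have [measurable]: "?G \<in> sets ?\<Omega>" by measurable
  have H_int: "integrable ?\<Omega> (\<lambda>\<omega>. indicator ?G \<omega> * H (restrict \<omega> I))"
    using H(2,3) by (intro P.integrable_const_bound[where B=1]) (auto simp: indicator_def)
  have "emeasure ?\<Omega> (?G \<inter> A) \<le> (\<integral>\<^sup>+\<omega>. indicator G (restrict \<omega> I) * ennreal (H (restrict \<omega> I)) \<partial>?\<Omega>)"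
    using M A G _ slice
    by (rule emeasure_PiM_restrict_vimage_Int_le[where H="\<lambda>x. ennreal (H x)"]) measurable
  also have "\<dots> = (\<integral>\<^sup>+\<omega>. ennreal (indicator ?G \<omega> * H (restrict \<omega> I)) \<partial>?\<Omega>)"
    by (intro nn_integral_cong) (simp add: indicator_def)
  also have "\<dots> = ennreal (\<integral>\<omega>\<in>?G. H (restrict \<omega> I) \<partial>?\<Omega>)"
    using H(2) H_int by (subst nn_integral_eq_integral) (auto simp: set_lebesgue_integral_def)
  finally show ?thesis
    using H(2) by (simp add: P.emeasure_eq_measure set_lebesgue_integral_def indicator_def)
qed

lemma real_cond_exp_indicator_PiM_le:
  fixes M :: "'i \<Rightarrow> 'a measure" and I :: "'i set" and H :: "('i \<Rightarrow> 'a) \<Rightarrow> real"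
  assumes M: "\<And>i. prob_space (M i)" and A: "A \<in> sets (PiM UNIV M)"
    and H: "H \<in> borel_measurable (PiM I M)" "\<And>x. 0 \<le> H x" "\<And>x. H x \<le> 1"
    and slice: "\<And>x. x \<in> space (PiM I M) \<Longrightarrow>
      emeasure (PiM (- I) M) {y \<in> space (PiM (- I) M). merge I (- I) (x, y) \<in> A} \<le> ennreal (H x)"
  shows "AE \<omega> in PiM UNIV M.
    real_cond_exp (PiM UNIV M) (vimage_algebra (space (PiM UNIV M)) (\<lambda>\<omega>. restrict \<omega> I) (PiM I M))
      (indicator A) \<omega> \<le> H (restrict \<omega> I)"
proof -
  let ?\<Omega> = "PiM UNIV M" and ?M1 = "PiM I M" and ?r = "\<lambda>\<omega>. restrict \<omega> I"
  let ?F = "vimage_algebra (space ?\<Omega>) ?r ?M1"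
  interpret P: prob_space ?\<Omega> using M by (rule prob_space_PiM)
  have r[measurable]: "?r \<in> measurable ?\<Omega> ?M1"
    by (rule measurable_restrict_subset) simp
  have r_space: "?r \<in> space ?\<Omega> \<rightarrow> space ?M1"
    using measurable_space[OF r] by blast
  have sets_F: "sets ?F = {?r -` G \<inter> space ?\<Omega> | G. G \<in> sets ?M1}"
    by (rule sets_vimage_algebra2[OF r_space])
  have "subalgebra ?\<Omega> ?F"
    unfolding subalgebra_def sets_F by (auto intro: measurable_sets[OF r])
  then have "sigma_finite_subalgebra ?\<Omega> ?F"
    by (intro finite_measure_subalgebra_is_sigma_finite) (unfold_locales, assumption)
  moreover have "integrable ?\<Omega> (indicator A :: _ \<Rightarrow> real)"
    using A by (intro P.integrable_const_bound[where B=1]) auto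
  moreover have "(\<lambda>\<omega>. H (?r \<omega>)) \<in> borel_measurable ?F"
    using measurable_vimage_algebra1[OF r_space] H(1) by (rule measurable_comp[unfolded o_def])
  moreover have "integrable ?\<Omega> (\<lambda>\<omega>. H (?r \<omega>))"
    using H by (intro P.integrable_const_bound[where B=1]) auto
  moreover have "(\<integral>\<omega>\<in>G. indicator A \<omega> \<partial>?\<Omega>) \<le> (\<integral>\<omega>\<in>G. H (?r \<omega>) \<partial>?\<Omega>)" if "G \<in> sets ?F" for G
  proof -
    from that obtain G' where G': "G' \<in> sets ?M1" "G = ?r -` G' \<inter> space ?\<Omega>"
      using sets_F by auto
    have "G \<inter> A \<inter> space ?\<Omega> = G \<inter> A"
      using sets.sets_into_space[OF A] by blast
    then have "(\<integral>\<omega>\<in>G. indicator A \<omega> \<partial>?\<Omega>) = measure ?\<Omega> (G \<inter> A)"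
      by (simp add: set_lebesgue_integral_def indicator_inter_arith[symmetric])
    also have "\<dots> \<le> (\<integral>\<omega>\<in>G. H (?r \<omega>) \<partial>?\<Omega>)"
      unfolding G'(2) using M A G'(1) H slice by (rule measure_PiM_restrict_vimage_Int_le)
    finally show ?thesis .
  qed
  ultimately show ?thesis
    by (rule real_cond_exp_le_of_set_integral_le)
qed

section \<open>Concentration of the Favard length\<close>

lemma sets_offspring_space_eq_borel:
  "sets (count_space UNIV \<Otimes>\<^sub>M (\<Pi>\<^sub>M i\<in>(UNIV::nat set). (borel :: (real^2) measure))) =
   sets (borel :: (nat \<times> (nat \<Rightarrow> real^2)) measure)"
proof -
  have "sets (count_space UNIV \<Otimes>\<^sub>M (\<Pi>\<^sub>M i\<in>(UNIV::nat set). (borel :: (real^2) measure))) =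
      sets ((borel :: nat measure) \<Otimes>\<^sub>M (borel :: (nat \<Rightarrow> real^2) measure))"
    by (intro sets_pair_measure_cong sets_PiM_equal_borel) (simp add: sets_borel_eq_count_space)
  also have "\<dots> = sets (borel :: (nat \<times> (nat \<Rightarrow> real^2)) measure)"
    by (simp only: borel_prod)
  finally show ?thesis .
qed

locale gw_model =
  fixes J0 :: "(real^2) set" and \<rho> :: real and D :: "(nat \<times> (nat \<Rightarrow> real^2)) measure"
  assumes compact_J0: "compact J0" and rho_pos: "0 < \<rho>" and prob_space_D: "prob_space D"
    and sets_D: "sets D = sets (count_space UNIV \<Otimes>\<^sub>M (\<Pi>\<^sub>M i\<in>(UNIV::nat set). (borel :: (real^2) measure)))"
    and AE_offspring_inside: "AE d in D. offspring_inside J0 \<rho> d"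
begin

abbreviation "\<Omega> \<equiv> gw_space D"

abbreviation past :: "nat \<Rightarrow> gw_realization measure" where
  "past m \<equiv> PiM {w. length w < m} (\<lambda>_. D)"

abbreviation future :: "nat \<Rightarrow> gw_realization measure" where
  "future m \<equiv> PiM (- {w. length w < m}) (\<lambda>_. D)"

abbreviation "merge_at m \<equiv> merge {w. length w < m} (- {w. length w < m})"

lemma prob_space_PiM_D: "prob_space (PiM K (\<lambda>_. D))"
  by (intro prob_space_PiM prob_space_D)

lemma sets_gw_space: "sets \<Omega> = sets (borel :: gw_realization measure)"
proof -
  have "sets \<Omega> = sets (PiM (UNIV :: nat list set) (\<lambda>_. borel :: (nat \<times> (nat \<Rightarrow> real^2)) measure))"
    unfolding gw_space_def using sets_D sets_offspring_space_eq_borel by (intro sets_PiM_cong) auto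
  also have "\<dots> = sets (borel :: gw_realization measure)"
    by (rule sets_PiM_equal_borel)
  finally show ?thesis .
qed

lemma measurable_Fav_gw_S[measurable]: "(\<lambda>\<omega>. Fav (gw_S J0 \<rho> \<omega> k)) \<in> borel_measurable \<Omega>"
  using borel_measurable_Fav_gw_S[OF compact_J0] measurable_cong_sets[OF sets_gw_space refl] by blast

lemma measurable_gw_Z[measurable]: "(\<lambda>\<omega>. gw_Z \<rho> \<omega> m) \<in> borel_measurable \<Omega>"
  using borel_measurable_gw_Z measurable_cong_sets[OF sets_gw_space refl] by blast

lemma measurable_subtree:
  assumes "\<And>u. u @ v \<in> K"
  shows "(\<lambda>y u. y (u @ v)) \<in> measurable (PiM K (\<lambda>_. D)) \<Omega>"
proof -
  have "(\<lambda>y. \<lambda>u\<in>UNIV. y (u @ v)) \<in> measurable (PiM K (\<lambda>_. D)) (PiM UNIV (\<lambda>_. D))"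
    using assms by (intro measurable_restrict measurable_component_singleton)
  then show ?thesis unfolding gw_space_def restrict_UNIV .
qed

lemma distr_subtree:
  assumes "length v = m"
  shows "distr (future m) \<Omega> (\<lambda>y u. y (u @ v)) = \<Omega>"
  using assms distr_PiM_reindex[of "- {w. length w < m}" "\<lambda>_. D" "\<lambda>u. u @ v" UNIV] prob_space_D
  unfolding gw_space_def restrict_UNIV by (auto simp: inj_on_def)

lemma gw_nodes_merge_at: "gw_nodes \<rho> (merge_at m (x, y)) m = gw_nodes \<rho> x m"
  by (rule gw_nodes_cong) (simp add: merge_def)

lemma gw_Z_merge_at: "gw_Z \<rho> (merge_at m (x, y)) m = gw_Z \<rho> x m"
  unfolding gw_Z_def gw_nodes_merge_at ..

lemma gw_Z_restrict: "gw_Z \<rho> (restrict \<omega> {w. length w < m}) m = gw_Z \<rho> \<omega> m"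
proof -
  have "gw_nodes \<rho> (restrict \<omega> {w. length w < m}) m = gw_nodes \<rho> \<omega> m"
    by (rule gw_nodes_cong) simp
  then show ?thesis by (simp add: gw_Z_def)
qed

lemma gw_subtree_merge_at: "length v = m \<Longrightarrow> gw_subtree v (merge_at m (x, y)) = (\<lambda>u. y (u @ v))"
  by (auto simp: gw_subtree_def merge_def fun_eq_iff)

lemma measurable_gw_Z_past: "(\<lambda>x. gw_Z \<rho> x m) \<in> borel_measurable (past m)"
proof -
  interpret future: prob_space "future m" by (rule prob_space_PiM_D)
  obtain y where y: "y \<in> space (future m)" using future.not_empty by blast
  have "(\<lambda>x. (x, y)) \<in> measurable (past m) (past m \<Otimes>\<^sub>M future m)"
    using y by measurable
  moreover have "merge_at m \<in> measurable (past m \<Otimes>\<^sub>M future m) (PiM UNIV (\<lambda>_. D))"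
    using measurable_merge[of "{w. length w < m}" "- {w. length w < m}" "\<lambda>_. D"] by simp
  ultimately have "(\<lambda>x. merge_at m (x, y)) \<in> measurable (past m) (PiM UNIV (\<lambda>_. D))"
    by (rule measurable_comp[unfolded o_def])
  then have "(\<lambda>x. gw_Z \<rho> (merge_at m (x, y)) m) \<in> borel_measurable (past m)"
    using measurable_gw_Z unfolding gw_space_def by measurable
  then show ?thesis by (simp add: gw_Z_merge_at)
qed

lemma AE_future_Fav_subtree_le:
  assumes "length v = m"
  shows "AE y in future m. Fav (gw_S J0 \<rho> (\<lambda>u. y (u @ v)) k) \<le> Fav J0"
proof -
  have "AE y in future m. \<forall>w\<in>- {w. length w < m}. offspring_inside J0 \<rho> (y w)"
    by (intro AE_ball_countable[THEN iffD2] ballI AE_PiM_component prob_space_D AE_offspring_inside)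
      (auto intro: countableI_type)
  then show ?thesis
  proof eventually_elim
    case (elim y)
    then have "gw_S J0 \<rho> (\<lambda>u. y (u @ v)) k \<subseteq> J0"
      using assms by (intro gw_S_subset) auto
    then show ?case by (intro Fav_mono compact_J0 compact_gw_S)
  qed
qed

lemma expectation_Fav_subtree:
  assumes "length v = m"
  shows "(\<integral>y. Fav (gw_S J0 \<rho> (\<lambda>u. y (u @ v)) k) \<partial>future m) = (\<integral>\<omega>. Fav (gw_S J0 \<rho> \<omega> k) \<partial>\<Omega>)"
proof -
  have "(\<integral>\<omega>. Fav (gw_S J0 \<rho> \<omega> k) \<partial>\<Omega>) = (\<integral>\<omega>. Fav (gw_S J0 \<rho> \<omega> k) \<partial>distr (future m) \<Omega> (\<lambda>y u. y (u @ v)))"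
    using assms by (simp add: distr_subtree)
  also have "\<dots> = (\<integral>y. Fav (gw_S J0 \<rho> (\<lambda>u. y (u @ v)) k) \<partial>future m)"
    using assms by (intro integral_distr measurable_subtree measurable_Fav_gw_S) auto
  finally show ?thesis by simp
qed

text \<open>Distinct nodes of one generation root disjoint subtrees, so the corresponding variables
  depend on disjoint sets of coordinates.\<close>
lemma indep_vars_Fav_subtrees:
  assumes "N \<subseteq> {v. length v = m}"
  shows "prob_space.indep_vars (future m) (\<lambda>_. borel) (\<lambda>v y. \<rho> ^ m * Fav (gw_S J0 \<rho> (\<lambda>u. y (u @ v)) k)) N"
proof -
  define K where "K v = range (\<lambda>u. u @ v)" for v :: "nat list"
  have "replicate m 0 \<in> - {w::nat list. length w < m}" by simp
  then have "- {w::nat list. length w < m} \<noteq> {}" by blast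
  moreover have "K v \<subseteq> - {w. length w < m}" if "v \<in> N" for v
    using that assms by (auto simp: K_def)
  moreover have "disjoint_family_on K N"
  proof (unfold disjoint_family_on_def, intro ballI impI)
    fix v w assume "v \<in> N" "w \<in> N" "v \<noteq> w"
    then have "length v = length w" using assms by auto
    show "K v \<inter> K w = {}"
    proof (rule ccontr)
      assume "K v \<inter> K w \<noteq> {}"
      then obtain u u' where "u @ v = u' @ w" unfolding K_def by auto
      with \<open>length v = length w\<close> \<open>v \<noteq> w\<close> show False
        by (simp add: append_eq_append_conv)
    qed
  qed
  moreover have "(\<lambda>z. \<rho> ^ m * Fav (gw_S J0 \<rho> (\<lambda>u. z (u @ v)) k)) \<in> borel_measurable (PiM (K v) (\<lambda>_. D))" for v
    using measurable_subtree[of v "K v"] by (simp add: K_def)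
  ultimately have "prob_space.indep_vars (future m) (\<lambda>_. borel)
      (\<lambda>v y. \<rho> ^ m * Fav (gw_S J0 \<rho> (\<lambda>u. restrict y (K v) (u @ v)) k)) N"
    by (intro indep_vars_PiM_blocks prob_space_D)
  moreover have restrict_eq: "(\<lambda>u. restrict y (K v) (u @ v)) = (\<lambda>u. y (u @ v))" for y v
    by (auto simp: K_def)
  ultimately show ?thesis
    by (simp only: restrict_eq)
qed


lemma prob_sum_Fav_subtrees_ge_le:
  assumes N: "finite N" "N \<noteq> {}" "N \<subseteq> {v. length v = m}" and "s \<ge> 0"
  shows "measure (future m) {y \<in> space (future m).
      \<rho> ^ m * real (card N) * (\<integral>\<omega>. Fav (gw_S J0 \<rho> \<omega> k) \<partial>\<Omega>) + s
        \<le> (\<Sum>v\<in>N. \<rho> ^ m * Fav (gw_S J0 \<rho> (\<lambda>u. y (u @ v)) k))}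
    \<le> exp (- (2 / (Fav J0 + 1)\<^sup>2 * s\<^sup>2) / (\<rho> ^ m * real (card N) * \<rho> ^ m))"
proof -
  interpret future: prob_space "future m" by (rule prob_space_PiM_D)
  define X where "X v y = \<rho> ^ m * Fav (gw_S J0 \<rho> (\<lambda>u. y (u @ v)) k)" for v y
  \<comment> \<open>The \<open>+ 1\<close> keeps the range of the summands nondegenerate when \<open>Fav J0 = 0\<close>.\<close>
  define b where "b = \<rho> ^ m * (Fav J0 + 1)"
  have "b > 0" using rho_pos Fav_nonneg[of J0] by (simp add: b_def)
  interpret H: Hoeffding_ineq "future m" N X "\<lambda>_. 0" "\<lambda>_. b" "\<Sum>v\<in>N. future.expectation (X v)"
  proof unfold_locales
    show "future.indep_vars (\<lambda>_. borel) X N"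
      unfolding X_def[abs_def] using N(3) by (rule indep_vars_Fav_subtrees)
    show "AE y in future m. X v y \<in> {0..b}" if "v \<in> N" for v
    proof -
      have "AE y in future m. Fav (gw_S J0 \<rho> (\<lambda>u. y (u @ v)) k) \<le> Fav J0"
        using N(3) that by (intro AE_future_Fav_subtree_le) auto
      then show ?thesis
        by eventually_elim (use rho_pos in \<open>auto simp: X_def b_def Fav_nonneg intro!: mult_left_mono\<close>)
    qed
  qed (rule N(1))
  have "future.expectation (X v) = \<rho> ^ m * (\<integral>\<omega>. Fav (gw_S J0 \<rho> \<omega> k) \<partial>\<Omega>)" if "v \<in> N" for v
  proof -
    have "length v = m" using that N(3) by auto
    then show ?thesis unfolding X_def[abs_def] by (simp add: expectation_Fav_subtree)
  qed
  then have "(\<Sum>v\<in>N. future.expectation (X v)) = \<rho> ^ m * real (card N) * (\<integral>\<omega>. Fav (gw_S J0 \<rho> \<omega> k) \<partial>\<Omega>)"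
    by simp
  then have "measure (future m) {y \<in> space (future m).
      \<rho> ^ m * real (card N) * (\<integral>\<omega>. Fav (gw_S J0 \<rho> \<omega> k) \<partial>\<Omega>) + s \<le> (\<Sum>v\<in>N. X v y)}
    \<le> exp (-2 * s\<^sup>2 / (\<Sum>v\<in>N. (b - 0)\<^sup>2))"
    using H.Hoeffding_ineq_ge[OF \<open>s \<ge> 0\<close>] \<open>b > 0\<close> N(1,2) by (simp add: card_gt_0_iff)
  also have "(\<Sum>v\<in>N. (b - 0)\<^sup>2) = \<rho> ^ m * real (card N) * \<rho> ^ m * (Fav J0 + 1)\<^sup>2"
    by (simp add: b_def power_mult_distrib power2_eq_square)
  also have "-2 * s\<^sup>2 / (\<rho> ^ m * real (card N) * \<rho> ^ m * (Fav J0 + 1)\<^sup>2) =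
      - (2 / (Fav J0 + 1)\<^sup>2 * s\<^sup>2) / (\<rho> ^ m * real (card N) * \<rho> ^ m)"
    using Fav_nonneg[of J0] by (simp add: field_simps)
  finally show ?thesis by (simp add: X_def)
qed

lemma emeasure_future_Fav_gt_le:
  assumes "s > 0"
  shows "emeasure (future m) {y \<in> space (future m).
      gw_Z \<rho> x m * (\<integral>\<omega>. Fav (gw_S J0 \<rho> \<omega> k) \<partial>\<Omega>) + s < Fav (gw_S J0 \<rho> (merge_at m (x, y)) (k + m))}
    \<le> ennreal (exp (- (2 / (Fav J0 + 1)\<^sup>2 * s\<^sup>2) / (gw_Z \<rho> x m * \<rho> ^ m)))"
    (is "emeasure _ ?E \<le> _")
proof (cases "gw_nodes \<rho> x m = {}")
  case True
  interpret future: prob_space "future m" by (rule prob_space_PiM_D)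
  from True have "gw_Z \<rho> x m = 0" by (simp add: gw_Z_def)
  then show ?thesis using future.emeasure_le_1 by simp
next
  case False
  interpret future: prob_space "future m" by (rule prob_space_PiM_D)
  let ?N = "gw_nodes \<rho> x m"
  have N: "finite ?N" "?N \<subseteq> {v. length v = m}"
    by (rule finite_gw_nodes) (auto simp: gw_nodes_eq)
  let ?F = "{y \<in> space (future m). \<rho> ^ m * real (card ?N) * (\<integral>\<omega>. Fav (gw_S J0 \<rho> \<omega> k) \<partial>\<Omega>) + s
    \<le> (\<Sum>v\<in>?N. \<rho> ^ m * Fav (gw_S J0 \<rho> (\<lambda>u. y (u @ v)) k))}"
  have "?E \<subseteq> ?F"
  proof
    fix y assume "y \<in> ?E"
    moreover have "Fav (gw_S J0 \<rho> (merge_at m (x, y)) (k + m)) \<le> (\<Sum>v\<in>?N. \<rho> ^ m * Fav (gw_S J0 \<rho> (\<lambda>u. y (u @ v)) k))"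
      using Fav_gw_S_add_le[OF compact_J0 rho_pos, of "merge_at m (x, y)" k m] N(2)
      by (simp add: gw_nodes_merge_at gw_subtree_merge_at subset_iff)
    ultimately show "y \<in> ?F" unfolding gw_Z_def by auto
  qed
  moreover have "(\<lambda>y. \<rho> ^ m * Fav (gw_S J0 \<rho> (\<lambda>u. y (u @ v)) k)) \<in> borel_measurable (future m)"
    if "v \<in> ?N" for v
  proof -
    have "(\<lambda>y u. y (u @ v)) \<in> measurable (future m) \<Omega>"
      using that N(2) by (intro measurable_subtree) auto
    then show ?thesis by measurable
  qed
  then have "?F \<in> sets (future m)" by measurable
  ultimately have "emeasure (future m) ?E \<le> emeasure (future m) ?F"
    by (rule emeasure_mono)
  also have "\<dots> \<le> ennreal (exp (- (2 / (Fav J0 + 1)\<^sup>2 * s\<^sup>2) / (gw_Z \<rho> x m * \<rho> ^ m)))"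
    using prob_sum_Fav_subtrees_ge_le[OF N(1) False N(2), of s k] assms
    by (simp add: future.emeasure_eq_measure gw_Z_def ennreal_leI)
  finally show ?thesis .
qed

theorem real_cond_exp_Fav_gw_S_gt_le:
  assumes "m < n" "s > 0"
  shows "AE \<omega> in \<Omega>.
    real_cond_exp \<Omega> (gw_filt D m)
      (indicator {\<omega>' \<in> space \<Omega>.
          Fav (gw_S J0 \<rho> \<omega>' n) > gw_Z \<rho> \<omega>' m * (\<integral>\<omega>''. Fav (gw_S J0 \<rho> \<omega>'' (n - m)) \<partial>\<Omega>) + s}) \<omega>
    \<le> exp (- (2 / (Fav J0 + 1)\<^sup>2 * s\<^sup>2) / (gw_Z \<rho> \<omega> m * \<rho> ^ m))"
proof -
  define k where "k = n - m"
  have n: "n = k + m" using assms(1) by (simp add: k_def)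
  let ?A = "{\<omega>' \<in> space \<Omega>. Fav (gw_S J0 \<rho> \<omega>' n) > gw_Z \<rho> \<omega>' m * (\<integral>\<omega>''. Fav (gw_S J0 \<rho> \<omega>'' k) \<partial>\<Omega>) + s}"
  define H where "H x = exp (- (2 / (Fav J0 + 1)\<^sup>2 * s\<^sup>2) / (gw_Z \<rho> x m * \<rho> ^ m))" for x
  have "AE \<omega> in PiM UNIV (\<lambda>_. D).
      real_cond_exp (PiM UNIV (\<lambda>_. D))
        (vimage_algebra (space (PiM UNIV (\<lambda>_. D))) (\<lambda>\<omega>. restrict \<omega> {w. length w < m}) (past m))
        (indicator ?A) \<omega> \<le> H (restrict \<omega> {w. length w < m})"
  proof (rule real_cond_exp_indicator_PiM_le[OF prob_space_D])
    show "?A \<in> sets (PiM UNIV (\<lambda>_. D))"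
      unfolding gw_space_def[symmetric] by measurable
    show "H \<in> borel_measurable (past m)"
      unfolding H_def using measurable_gw_Z_past by measurable
    have "0 \<le> 2 / (Fav J0 + 1)\<^sup>2 * s\<^sup>2 / (gw_Z \<rho> x m * \<rho> ^ m)" for x
      using rho_pos Fav_nonneg[of J0] by (simp add: gw_Z_def)
    then show "0 \<le> H x" "H x \<le> 1" for x
      by (simp_all add: H_def)
    fix x assume x: "x \<in> space (past m)"
    have "merge_at m (x, y) \<in> space \<Omega>" if "y \<in> space (future m)" for y
      using measurable_space[OF measurable_merge[of "{w. length w < m}" "- {w. length w < m}" "\<lambda>_. D"], of "(x, y)"]
        x that by (simp add: space_pair_measure gw_space_def)
    then have "{y \<in> space (future m). merge_at m (x, y) \<in> ?A} =
        {y \<in> space (future m). gw_Z \<rho> x m * (\<integral>\<omega>. Fav (gw_S J0 \<rho> \<omega> k) \<partial>\<Omega>) + s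
          < Fav (gw_S J0 \<rho> (merge_at m (x, y)) (k + m))}"
      by (auto simp: n gw_Z_merge_at)
    then show "emeasure (future m) {y \<in> space (future m). merge_at m (x, y) \<in> ?A} \<le> ennreal (H x)"
      unfolding H_def using emeasure_future_Fav_gt_le[OF assms(2)] by simp
  qed
  then show ?thesis
    unfolding gw_filt_def gw_space_def[symmetric] H_def gw_Z_restrict k_def .
qed

end

theorem lemma3p5:
  fixes J0 :: "(real^2) set" and \<rho> :: real and D :: "(nat \<times> (nat \<Rightarrow> real^2)) measure"
  assumes "compact J0" and "closure (interior J0) = J0" and "finite (components J0)"
    and "0 < \<rho>" and "\<rho> < 1"
    and "prob_space D"
    and "sets D = sets (count_space UNIV \<Otimes>\<^sub>M (\<Pi>\<^sub>M i\<in>(UNIV::nat set). (borel :: (real^2) measure)))"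
    and "\<exists>B::nat. AE d in D. fst d \<le> B"
    and "AE d in D. \<forall>i < fst d. (\<lambda>x. \<rho> *\<^sub>R x + snd d i) ` J0 \<subseteq> J0"
    and "(\<integral>d. real (fst d) \<partial>D) = 1 / \<rho>"
  shows "\<exists>c>0. \<forall>s>0. \<forall>m n::nat. m < n \<longrightarrow>
     (AE \<omega> in gw_space D.
        real_cond_exp (gw_space D) (gw_filt D m)
          (indicator {\<omega>' \<in> space (gw_space D).
              Fav (gw_S J0 \<rho> \<omega>' n) >
                gw_Z \<rho> \<omega>' m * (\<integral>\<omega>''. Fav (gw_S J0 \<rho> \<omega>'' (n - m)) \<partial>gw_space D) + s}) \<omega>
        \<le> exp (- (c * s\<^sup>2) / (gw_Z \<rho> \<omega> m * \<rho> ^ m)))"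
proof -
  \<comment> \<open>Besides \<open>D\<close> being a probability measure on the stated \<sigma>-algebra, the bound only uses
    compactness of \<open>J0\<close>, \<open>\<rho> > 0\<close> and that children stay inside \<open>J0\<close>.\<close>
  interpret gw_model J0 \<rho> D
    using assms(1,4,6,7) assms(9)[folded offspring_inside_def] by (rule gw_model.intro)
  have "2 / (Fav J0 + 1)\<^sup>2 > 0"
    using Fav_nonneg[of J0] by simp
  then show ?thesis
    using real_cond_exp_Fav_gw_S_gt_le by blast
qed

end
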